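(* Assume $K_1\subseteq K_2\subseteq\cdots\subseteq K_n\subseteq\mathbb F_q$ are subfields, $d_i=|K_i|$, $n\ge 2$. Let $\delta\ge 2$, $s\in\{1,\dots,n\}$ with $r:=d_s-\delta+1\ge 1$, and let $d=\sum_{i=1}^k(d_i-1)+\ell$ with $0\le k<n$ and $0<\ell\le d_{k+1}-1$. Assume that $n=k+1$ or $d_1\ge 3$. Assume that neither (i) [$k+2\le n$ and $d_{k+2}\le d_s$] nor (ii) [$d_s\le d_{k+1}$ and $0\le d_s-(d_{k+1}-\ell)<r$] holds, and that $d_s-(d_{k+1}-\ell)=r$. Then $$W^{(1)}(\mathcal D^{(\delta,s)}_{\mathcal X}(d))=\begin{cases} d_n-\ell+1 & \text{if } n=k+1,\\ (d_{k+1}-\ell+1)(d_{k+2}-1)\prod_{i=k+3}^n d_i & \text{if } n>k+1.\end{cases}$$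
   Context: $\mathcal X=K_1\times\cdots\times K_n=\{\boldsymbol\alpha_1,\dots,\boldsymbol\alpha_m\}$ (fixed enumeration), $m=\prod d_i$; $\Psi:\mathbb F_q[X_1,\dots,X_n]\to\mathbb F_q^m$, $f\mapsto(f(\boldsymbol\alpha_1),\dots,f(\boldsymbol\alpha_m))$. For $d\ge 0$, $\mathbb F_q[X_1,\dots,X_n]_{\le d}$ is the space of polynomials of degree at most $d$ together with $0$. $\mathcal P^{(\delta,s)}_d$ is the set of $f\in\mathbb F_q[X_1,\dots,X_n]_{\le d}$ with $\deg_{X_s}f<d_s-\delta+1$, together with $0$, and $\mathcal D^{(\delta,s)}_{\mathcal X}(d)=\Psi(\mathcal P^{(\delta,s)}_d)$. $W^{(1)}(C)$ is the minimum Hamming distance of a linear code $C$. Empty products equal $1$. *)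

theory Defs
  imports Main "HOL-Library.Poly_Mapping" "HOL-Library.FuncSet"
begin

type_synonym 'a mpoly = "(nat \<Rightarrow>\<^sub>0 nat) \<Rightarrow>\<^sub>0 'a"

definition is_subfield :: "'a::field set \<Rightarrow> bool" where
  "is_subfield K \<longleftrightarrow> 0 \<in> K \<and> 1 \<in> K \<and> (\<forall>x\<in>K. \<forall>y\<in>K. x + y \<in> K \<and> x * y \<in> K)
     \<and> (\<forall>x\<in>K. - x \<in> K) \<and> (\<forall>x\<in>K. x \<noteq> 0 \<longrightarrow> inverse x \<in> K)"

definition mon_deg :: "(nat \<Rightarrow>\<^sub>0 nat) \<Rightarrow> nat" where
  "mon_deg m = (\<Sum>i\<in>Poly_Mapping.keys m. Poly_Mapping.lookup m i)"

definition in_vars :: "nat \<Rightarrow> 'a::zero mpoly \<Rightarrow> bool" where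
  "in_vars n f \<longleftrightarrow> (\<forall>m\<in>Poly_Mapping.keys f. Poly_Mapping.keys m \<subseteq> {1..n})"

definition mpoly_eval :: "'a::comm_ring_1 mpoly \<Rightarrow> (nat \<Rightarrow> 'a) \<Rightarrow> 'a" where
  "mpoly_eval f a = (\<Sum>m\<in>Poly_Mapping.keys f. Poly_Mapping.lookup f m * (\<Prod>i\<in>Poly_Mapping.keys m. a i ^ Poly_Mapping.lookup m i))"

definition grid :: "nat \<Rightarrow> (nat \<Rightarrow> 'a set) \<Rightarrow> (nat \<Rightarrow> 'a) set" where
  "grid n K = PiE {1..n} K"

text \<open>P^{(delta,s)}_d: polynomials in X_1..X_n of degree at most d with deg_{X_s} < d_s - delta + 1
  (the zero polynomial, having no monomials, is included). Here r = d_s - delta + 1.\<close>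
definition Pds :: "nat \<Rightarrow> nat \<Rightarrow> int \<Rightarrow> int \<Rightarrow> 'a::zero mpoly set" where
  "Pds n s r d = {f. in_vars n f \<and> (\<forall>m\<in>Poly_Mapping.keys f. int (mon_deg m) \<le> d \<and> int (Poly_Mapping.lookup m s) < r)}"

text \<open>The evaluation code Psi(P): codewords are functions on the point set X
  (coordinates indexed by the points of X rather than by a fixed enumeration).\<close>
definition eval_code :: "(nat \<Rightarrow> 'a) set \<Rightarrow> 'a::comm_ring_1 mpoly set \<Rightarrow> ((nat \<Rightarrow> 'a) \<Rightarrow> 'a) set" where
  "eval_code X P = (\<lambda>f. restrict (mpoly_eval f) X) ` P"

definition hweight :: "(nat \<Rightarrow> 'a) set \<Rightarrow> ((nat \<Rightarrow> 'a) \<Rightarrow> 'a::zero) \<Rightarrow> nat" where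
  "hweight X c = card {x\<in>X. c x \<noteq> 0}"

text \<open>Minimum Hamming distance of a linear code = minimum weight of a nonzero codeword.\<close>
definition min_dist :: "(nat \<Rightarrow> 'a) set \<Rightarrow> ((nat \<Rightarrow> 'a) \<Rightarrow> 'a::zero) set \<Rightarrow> nat" where
  "min_dist X C = Min {hweight X c | c. c \<in> C \<and> (\<exists>x\<in>X. c x \<noteq> 0)}"

end

theory Submission
  imports Defs "HOL-Computational_Algebra.Polynomial"
begin

text \<open>Lower bound: on the grid, a codeword polynomial agrees with one in which every exponent of
  \<open>X\<^sub>i\<close> is reduced below \<open>d\<^sub>i\<close>; the footprint bound then provides a monomial \<open>X\<^sup>a\<close> of it such that
  the weight is at least \<open>\<Prod>(d\<^sub>i - a\<^sub>i)\<close>, where \<open>\<Sum>a\<^sub>i \<le> d\<close> and \<open>a\<^sub>s < r\<close>. Minimising this product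
  under these constraints amounts to spending the degree budget greedily on the smallest \<open>d\<^sub>i\<close>;
  as the failure of (i) forces \<open>s \<le> k + 1\<close> and \<open>d\<^sub>s < d\<^sub>k\<^sub>+\<^sub>2\<close>, and \<open>d\<^sub>s - (d\<^sub>k\<^sub>+\<^sub>1 - \<ell>) = r\<close>, the
  minimum is the claimed value.
  Upper bound: the product of the polynomials \<open>\<Prod>\<^sub>\<alpha>\<^sub>\<in>\<^sub>R\<^sub>i (X\<^sub>i - \<alpha>)\<close> with \<open>|R\<^sub>s| = r - 1\<close>,
  \<open>R\<^sub>i = K\<^sub>i - {0}\<close> for the other \<open>i \<le> k + 1\<close> and \<open>R\<^sub>k\<^sub>+\<^sub>2 = {0}\<close> is a codeword of exactly this weight.\<close>

section \<open>Finite subfields\<close>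

lemma subfield_card_ge_2:
  fixes K :: "'a::{field,finite} set"
  assumes "is_subfield K"
  shows "2 \<le> card K"
proof -
  have "{0, 1} \<subseteq> K" using assms unfolding is_subfield_def by auto
  then have "card {0::'a, 1} \<le> card K" by (rule card_mono[rotated]) simp
  then show ?thesis by simp
qed

lemma subfield_power_card_minus_1:
  fixes K :: "'a::field set"
  assumes sf: "is_subfield K" and fin: "finite K" and x: "x \<in> K" "x \<noteq> 0"
  shows "x ^ (card K - 1) = 1"
proof -
  let ?U = "K - {0}"
  have "inverse x \<in> K" using sf x unfolding is_subfield_def by blast
  then have bij: "bij_betw (\<lambda>y. x * y) ?U ?U"
    using sf x by (intro bij_betwI[where g="\<lambda>y. inverse x * y"]) (auto simp: is_subfield_def)
  have "x ^ card ?U * prod (\<lambda>y. y) ?U = prod (\<lambda>y. x * y) ?U"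
    by (simp add: prod.distrib)
  also have "\<dots> = prod (\<lambda>y. y) ?U"
    using prod.reindex_bij_betw[OF bij, of "\<lambda>y. y"] by simp
  finally have "x ^ card ?U = 1" using fin by simp
  moreover have "card ?U = card K - 1" using sf fin unfolding is_subfield_def by simp
  ultimately show ?thesis by simp
qed

text \<open>The exponent of the remainder of \<open>X ^ e\<close> modulo \<open>X ^ q - X\<close>.\<close>

definition exp_reduce :: "nat \<Rightarrow> nat \<Rightarrow> nat" where
  "exp_reduce q e = (if e = 0 then 0 else (e - 1) mod (q - 1) + 1)"

lemma exp_reduce_le: "exp_reduce q e \<le> e"
  using mod_less_eq_dividend[of "e - 1" "q - 1"] unfolding exp_reduce_def by (cases e) auto

lemma exp_reduce_less:
  assumes "2 \<le> q"
  shows "exp_reduce q e < q"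
proof -
  have "(e - 1) mod (q - 1) < q - 1" using assms by (intro mod_less_divisor) auto
  then show ?thesis unfolding exp_reduce_def by auto
qed

lemma subfield_power_exp_reduce:
  fixes K :: "'a::field set"
  assumes sf: "is_subfield K" and fin: "finite K" and x: "x \<in> K"
  shows "x ^ exp_reduce (card K) e = x ^ e"
proof (cases "e = 0 \<or> x = 0")
  case True
  then show ?thesis by (auto simp: exp_reduce_def)
next
  case False
  let ?q = "card K"
  have "e = (e - 1) div (?q - 1) * (?q - 1) + ((e - 1) mod (?q - 1) + 1)"
    using False div_mult_mod_eq[of "e - 1" "?q - 1"] by simp
  then have "x ^ e = (x ^ (?q - 1)) ^ ((e - 1) div (?q - 1)) * x ^ ((e - 1) mod (?q - 1) + 1)"
    by (metis power_add power_mult mult.commute)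
  also have "\<dots> = x ^ exp_reduce ?q e"
    using subfield_power_card_minus_1[OF sf fin x] False by (simp add: exp_reduce_def)
  finally show ?thesis by simp
qed

section \<open>The footprint bound\<close>

definition monomial_sum :: "nat \<Rightarrow> (nat \<Rightarrow> nat) set \<Rightarrow> ((nat \<Rightarrow> nat) \<Rightarrow> 'a::comm_ring_1) \<Rightarrow> (nat \<Rightarrow> 'a) \<Rightarrow> 'a" where
  "monomial_sum N S c x = (\<Sum>m\<in>S. c m * (\<Prod>i\<in>{1..N}. x i ^ m i))"

lemma card_PiE_insert_filter:
  assumes "M \<notin> I" "finite I" "\<And>i. finite (A i)"
  shows "card {x \<in> PiE (insert M I) A. P x} = (\<Sum>x'\<in>PiE I A. card {y \<in> A M. P (x'(M := y))})"
proof -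
  let ?ext = "\<lambda>(y, x'). x'(M := y)"
  let ?D = "{(y, x'). (y, x') \<in> A M \<times> PiE I A \<and> P (x'(M := y))}"
  have inj: "inj_on ?ext ?D"
    using inj_combinator[OF assms(1), of A] by (rule inj_on_subset) auto
  have "{x \<in> PiE (insert M I) A. P x} = ?ext ` ?D"
    unfolding PiE_insert_eq by auto
  then have "card {x \<in> PiE (insert M I) A. P x} = card ?D"
    using card_image[OF inj] by simp
  also have "?D = (\<lambda>(x', y). (y, x')) ` Sigma (PiE I A) (\<lambda>x'. {y \<in> A M. P (x'(M := y))})"
    by auto
  also have "card \<dots> = card (Sigma (PiE I A) (\<lambda>x'. {y \<in> A M. P (x'(M := y))}))"
    by (rule card_image) (auto intro: inj_onI)
  also have "\<dots> = (\<Sum>x'\<in>PiE I A. card {y \<in> A M. P (x'(M := y))})"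
    using assms by (intro card_SigmaI finite_PiE) auto
  finally show ?thesis .
qed

lemma card_nonroots_ge:
  fixes p :: "'a::idom poly"
  assumes "p \<noteq> 0" "finite A"
  shows "card A - degree p \<le> card {y \<in> A. poly p y \<noteq> 0}"
proof -
  have "card {y \<in> A. poly p y = 0} \<le> card {y. poly p y = 0}"
    using poly_roots_finite[OF assms(1)] by (intro card_mono) auto
  also have "\<dots> \<le> degree p" using card_poly_roots_bound[OF assms(1)] .
  finally have "card {y \<in> A. poly p y = 0} \<le> degree p" .
  moreover have "card A = card {y \<in> A. poly p y \<noteq> 0} + card {y \<in> A. poly p y = 0}"
    using assms(2) by (subst card_Un_disjoint[symmetric]) (auto intro: arg_cong[where f = card])
  ultimately show ?thesis by linarith
qed

definition last_var_poly :: "nat \<Rightarrow> (nat \<Rightarrow> nat) set \<Rightarrow> ((nat \<Rightarrow> nat) \<Rightarrow> 'a::comm_ring_1) \<Rightarrow> (nat \<Rightarrow> 'a) \<Rightarrow> 'a poly" where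
  "last_var_poly N S c x = (\<Sum>m\<in>S. monom (c m * (\<Prod>i\<in>{1..N}. x i ^ m i)) (m (Suc N)))"

lemma poly_last_var_poly:
  "poly (last_var_poly N S c x) y = monomial_sum (Suc N) S c (x(Suc N := y))"
proof -
  have "(\<Prod>i\<in>{1..Suc N}. (x(Suc N := y)) i ^ m i) = y ^ m (Suc N) * (\<Prod>i\<in>{1..N}. x i ^ m i)" for m
    by (simp add: prod.cl_ivl_Suc)
  then show ?thesis
    unfolding last_var_poly_def monomial_sum_def by (simp add: poly_sum poly_monom mult_ac)
qed

lemma degree_last_var_poly:
  assumes "finite S" "\<And>m. m \<in> S \<Longrightarrow> m (Suc N) \<le> t"
  shows "degree (last_var_poly N S c x) \<le> t"
  unfolding last_var_poly_def
  by (rule degree_sum_le[OF assms(1)]) (rule le_trans[OF degree_monom_le assms(2)])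

lemma coeff_last_var_poly:
  assumes "finite S"
  shows "coeff (last_var_poly N S c x) t =
    monomial_sum N ((\<lambda>m. m(Suc N := 0)) ` {m \<in> S. m (Suc N) = t}) (\<lambda>m. c (m(Suc N := t))) x"
proof -
  let ?St = "{m \<in> S. m (Suc N) = t}"
  have inj: "inj_on (\<lambda>m. m(Suc N := 0)) ?St"
    by (rule inj_onI) (metis (mono_tags, lifting) fun_upd_idem_iff fun_upd_upd mem_Collect_eq)
  have "coeff (last_var_poly N S c x) t = (\<Sum>m\<in>S. if m (Suc N) = t then c m * (\<Prod>i\<in>{1..N}. x i ^ m i) else 0)"
    unfolding last_var_poly_def coeff_sum coeff_monom by (rule sum.cong) auto
  also have "\<dots> = (\<Sum>m\<in>?St. c m * (\<Prod>i\<in>{1..N}. x i ^ m i))"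
    by (rule sum.inter_filter[symmetric, OF assms])
  also have "\<dots> = monomial_sum N ((\<lambda>m. m(Suc N := 0)) ` ?St) (\<lambda>m. c (m(Suc N := t))) x"
    unfolding monomial_sum_def sum.reindex[OF inj]
    by (intro sum.cong refl arg_cong2[where f = "(*)"] prod.cong) auto
  finally show ?thesis .
qed

lemma card_nonzero_last_var_ge:
  fixes c :: "(nat \<Rightarrow> nat) \<Rightarrow> 'a::idom"
  assumes S: "finite S" "\<And>m. m \<in> S \<Longrightarrow> m (Suc N) \<le> t" and "finite B"
    and lead: "monomial_sum N ((\<lambda>m. m(Suc N := 0)) ` {m \<in> S. m (Suc N) = t}) (\<lambda>m. c (m(Suc N := t))) x \<noteq> 0"
  shows "card B - t \<le> card {y \<in> B. monomial_sum (Suc N) S c (x(Suc N := y)) \<noteq> 0}"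
proof -
  let ?q = "last_var_poly N S c x"
  have "?q \<noteq> 0" using lead coeff_last_var_poly[OF S(1), of N c x t] by auto
  moreover have "degree ?q \<le> t" using S by (rule degree_last_var_poly)
  ultimately show ?thesis
    using card_nonroots_ge[OF _ \<open>finite B\<close>, of ?q] unfolding poly_last_var_poly by linarith
qed

lemma footprint_bound:
  fixes A :: "nat \<Rightarrow> 'a::idom set"
  assumes "finite S" "S \<noteq> {}" "\<And>m. m \<in> S \<Longrightarrow> c m \<noteq> 0"
    and "\<And>m i. m \<in> S \<Longrightarrow> i \<notin> {1..N} \<Longrightarrow> m i = 0"
    and fin: "\<And>i. finite (A i)"
  shows "\<exists>a\<in>S. (\<Prod>i\<in>{1..N}. card (A i) - a i) \<le> card {x \<in> PiE {1..N} A. monomial_sum N S c x \<noteq> 0}"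
  using assms(1-4)
proof (induction N arbitrary: S c)
  case 0
  then have "m = (\<lambda>_. 0)" if "m \<in> S" for m
    using that by auto
  then have "S = {\<lambda>_. 0}" using \<open>S \<noteq> {}\<close> by blast
  then show ?case using 0 by (simp add: monomial_sum_def)
next
  case (Suc N)
  \<comment> \<open>Apply the induction hypothesis to the leading coefficient in \<open>X\<^sub>N\<^sub>+\<^sub>1\<close>, of degree \<open>t\<close>.\<close>
  define t where "t = Max ((\<lambda>m. m (Suc N)) ` S)"
  define St where "St = {m \<in> S. m (Suc N) = t}"
  define S' where "S' = (\<lambda>m. m(Suc N := 0)) ` St"
  define c' where "c' = (\<lambda>m. c (m(Suc N := t)))"
  have "t \<in> (\<lambda>m. m (Suc N)) ` S"
    unfolding t_def using Suc.prems by (intro Max_in) auto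
  then have "St \<noteq> {}" unfolding St_def by auto
  have "\<exists>a'\<in>S'. (\<Prod>i\<in>{1..N}. card (A i) - a' i) \<le> card {x \<in> PiE {1..N} A. monomial_sum N S' c' x \<noteq> 0}"
  proof (rule Suc.IH)
    show "finite S'" unfolding S'_def St_def using Suc.prems by simp
    show "S' \<noteq> {}" unfolding S'_def using \<open>St \<noteq> {}\<close> by simp
    show "c' m \<noteq> 0" if "m \<in> S'" for m
      using that Suc.prems(3) unfolding S'_def St_def c'_def by auto
    show "m i = 0" if "m \<in> S'" "i \<notin> {1..N}" for m i
      using that Suc.prems(4) unfolding S'_def St_def by auto
  qed
  then obtain a where "a \<in> St"
    and IH: "(\<Prod>i\<in>{1..N}. card (A i) - (a(Suc N := 0)) i) \<le> card {x \<in> PiE {1..N} A. monomial_sum N S' c' x \<noteq> 0}"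
    unfolding S'_def by blast
  define T where "T = {x \<in> PiE {1..N} A. monomial_sum N S' c' x \<noteq> 0}"
  define fiber where "fiber = (\<lambda>x'. {y \<in> A (Suc N). monomial_sum (Suc N) S c (x'(Suc N := y)) \<noteq> 0})"
  have fiber_ge: "card (A (Suc N)) - t \<le> card (fiber x')" if "x' \<in> T" for x'
    unfolding fiber_def using Suc.prems(1) fin that
    by (intro card_nonzero_last_var_ge) (auto simp: t_def T_def S'_def St_def c'_def)
  have "(\<Prod>i\<in>{1..Suc N}. card (A i) - a i) = (\<Prod>i\<in>{1..N}. card (A i) - (a(Suc N := 0)) i) * (card (A (Suc N)) - t)"
    using \<open>a \<in> St\<close> unfolding St_def by (simp add: prod.cl_ivl_Suc)
  also have "\<dots> \<le> card T * (card (A (Suc N)) - t)"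
    using IH unfolding T_def by simp
  also have "\<dots> \<le> (\<Sum>x'\<in>T. card (fiber x'))"
    using sum_mono[of T "\<lambda>_. card (A (Suc N)) - t", OF fiber_ge] by simp
  also have "\<dots> \<le> (\<Sum>x'\<in>PiE {1..N} A. card (fiber x'))"
    using fin by (intro sum_mono2 finite_PiE) (auto simp: T_def)
  also have "\<dots> = card {x \<in> PiE (insert (Suc N) {1..N}) A. monomial_sum (Suc N) S c x \<noteq> 0}"
    unfolding fiber_def using fin by (intro card_PiE_insert_filter[symmetric]) auto
  also have "insert (Suc N) {1..N} = {1..Suc N}" by auto
  finally show ?case using \<open>a \<in> St\<close> unfolding St_def by blast
qed

section \<open>Codeword polynomials on the grid\<close>

lemma mon_deg_eq_sum:
  assumes "Poly_Mapping.keys m \<subseteq> {1..n}"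
  shows "mon_deg m = (\<Sum>i\<in>{1..n}. Poly_Mapping.lookup m i)"
  unfolding mon_deg_def using assms
  by (intro sum.mono_neutral_left) (auto simp: in_keys_iff)

lemma prod_keys_eq_prod_vars:
  fixes x :: "nat \<Rightarrow> 'a::comm_monoid_mult"
  assumes "Poly_Mapping.keys m \<subseteq> {1..n}"
  shows "(\<Prod>i\<in>Poly_Mapping.keys m. x i ^ Poly_Mapping.lookup m i) = (\<Prod>i\<in>{1..n}. x i ^ Poly_Mapping.lookup m i)"
  using assms by (intro prod.mono_neutral_left) (auto simp: in_keys_iff)

lemma grid_reduced_representation:
  fixes K :: "nat \<Rightarrow> 'a::{field,finite} set" and f :: "'a mpoly"
  assumes sf: "\<And>i. i \<in> {1..n} \<Longrightarrow> is_subfield (K i)" and vars: "in_vars n f"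
  obtains S c where "finite S" "\<And>m. m \<in> S \<Longrightarrow> c m \<noteq> 0"
    "\<And>m i. m \<in> S \<Longrightarrow> i \<notin> {1..n} \<Longrightarrow> m i = 0"
    "\<And>m i. m \<in> S \<Longrightarrow> i \<in> {1..n} \<Longrightarrow> m i < card (K i)"
    "\<And>m. m \<in> S \<Longrightarrow> \<exists>\<mu>\<in>Poly_Mapping.keys f. \<forall>i. m i \<le> Poly_Mapping.lookup \<mu> i"
    "\<And>x. x \<in> grid n K \<Longrightarrow> mpoly_eval f x = monomial_sum n S c x"
proof
  define red where
    "red = (\<lambda>\<mu> i. if i \<in> {1..n} then exp_reduce (card (K i)) (Poly_Mapping.lookup \<mu> i) else 0)"
  define c where "c = (\<lambda>m. \<Sum>\<mu>\<in>{\<mu> \<in> Poly_Mapping.keys f. red \<mu> = m}. Poly_Mapping.lookup f \<mu>)"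
  define S where "S = {m \<in> red ` Poly_Mapping.keys f. c m \<noteq> 0}"
  show "finite S" "\<And>m. m \<in> S \<Longrightarrow> c m \<noteq> 0" "\<And>m i. m \<in> S \<Longrightarrow> i \<notin> {1..n} \<Longrightarrow> m i = 0"
    unfolding S_def red_def by auto
  show "m i < card (K i)" if "m \<in> S" "i \<in> {1..n}" for m i
    using that subfield_card_ge_2[OF sf] exp_reduce_less unfolding S_def red_def by auto
  show "\<exists>\<mu>\<in>Poly_Mapping.keys f. \<forall>i. m i \<le> Poly_Mapping.lookup \<mu> i" if "m \<in> S" for m
    using that exp_reduce_le unfolding S_def red_def by fastforce
  fix x assume x: "x \<in> grid n K"
  have "(\<Prod>i\<in>Poly_Mapping.keys \<mu>. x i ^ Poly_Mapping.lookup \<mu> i) = (\<Prod>i\<in>{1..n}. x i ^ red \<mu> i)"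
    if "\<mu> \<in> Poly_Mapping.keys f" for \<mu>
  proof -
    have "x i ^ Poly_Mapping.lookup \<mu> i = x i ^ red \<mu> i" if "i \<in> {1..n}" for i
    proof -
      have "x i \<in> K i" using x that unfolding grid_def by auto
      then show ?thesis
        using that subfield_power_exp_reduce[OF sf[OF that]] unfolding red_def by simp
    qed
    moreover have "Poly_Mapping.keys \<mu> \<subseteq> {1..n}" using vars that unfolding in_vars_def by blast
    ultimately show ?thesis by (simp add: prod_keys_eq_prod_vars)
  qed
  then have "mpoly_eval f x = (\<Sum>\<mu>\<in>Poly_Mapping.keys f. Poly_Mapping.lookup f \<mu> * (\<Prod>i\<in>{1..n}. x i ^ red \<mu> i))"
    unfolding mpoly_eval_def by simp
  also have "\<dots> = (\<Sum>m\<in>red ` Poly_Mapping.keys f. c m * (\<Prod>i\<in>{1..n}. x i ^ m i))"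
    unfolding c_def sum_distrib_right by (subst sum.image_gen[where g = red, OF finite_keys]) (auto intro!: sum.cong)
  also have "\<dots> = monomial_sum n S c x"
    unfolding monomial_sum_def S_def by (rule sum.mono_neutral_right) auto
  finally show "mpoly_eval f x = monomial_sum n S c x" .
qed

lemma Pds_weight_ge_footprint:
  fixes K :: "nat \<Rightarrow> 'a::{field,finite} set"
  assumes sf: "\<And>i. i \<in> {1..n} \<Longrightarrow> is_subfield (K i)"
    and f: "f \<in> Pds n s r d" and x0: "x0 \<in> grid n K" "mpoly_eval f x0 \<noteq> 0"
  obtains a where "\<And>i. i \<in> {1..n} \<Longrightarrow> a i < card (K i)" "int (\<Sum>i\<in>{1..n}. a i) \<le> d" "int (a s) < r"
    "(\<Prod>i\<in>{1..n}. card (K i) - a i) \<le> card {x \<in> grid n K. mpoly_eval f x \<noteq> 0}"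
proof -
  have vars: "in_vars n f" using f unfolding Pds_def by blast
  obtain S c where S: "finite S" "\<And>m. m \<in> S \<Longrightarrow> c m \<noteq> 0"
    "\<And>m i. m \<in> S \<Longrightarrow> i \<notin> {1..n} \<Longrightarrow> m i = 0"
    "\<And>m i. m \<in> S \<Longrightarrow> i \<in> {1..n} \<Longrightarrow> m i < card (K i)"
    "\<And>m. m \<in> S \<Longrightarrow> \<exists>\<mu>\<in>Poly_Mapping.keys f. \<forall>i. m i \<le> Poly_Mapping.lookup \<mu> i"
    and eval: "\<And>x. x \<in> grid n K \<Longrightarrow> mpoly_eval f x = monomial_sum n S c x"
    using grid_reduced_representation[where K = K, OF sf vars] by blast
  have "S \<noteq> {}" using eval[OF x0(1)] x0(2) by (auto simp: monomial_sum_def)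
  have "\<exists>a\<in>S. (\<Prod>i\<in>{1..n}. card (K i) - a i) \<le> card {x \<in> PiE {1..n} K. monomial_sum n S c x \<noteq> 0}"
    by (rule footprint_bound) (use S \<open>S \<noteq> {}\<close> in auto)
  then obtain a where "a \<in> S"
    and bound: "(\<Prod>i\<in>{1..n}. card (K i) - a i) \<le> card {x \<in> PiE {1..n} K. monomial_sum n S c x \<noteq> 0}"
    by blast
  obtain \<mu> where \<mu>: "\<mu> \<in> Poly_Mapping.keys f" "\<And>i. a i \<le> Poly_Mapping.lookup \<mu> i"
    using S(5)[OF \<open>a \<in> S\<close>] by blast
  have "Poly_Mapping.keys \<mu> \<subseteq> {1..n}" using vars \<mu>(1) unfolding in_vars_def by blast
  then have "(\<Sum>i\<in>{1..n}. a i) \<le> mon_deg \<mu>"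
    using \<mu>(2) by (simp add: mon_deg_eq_sum sum_mono)
  moreover have "int (mon_deg \<mu>) \<le> d" "int (Poly_Mapping.lookup \<mu> s) < r"
    using f \<mu>(1) unfolding Pds_def by auto
  ultimately have "int (\<Sum>i\<in>{1..n}. a i) \<le> d" "int (a s) < r"
    using \<mu>(2)[of s] by linarith+
  moreover have "{x \<in> PiE {1..n} K. monomial_sum n S c x \<noteq> 0} = {x \<in> grid n K. mpoly_eval f x \<noteq> 0}"
    using eval unfolding grid_def by auto
  ultimately show ?thesis
    using S(4)[OF \<open>a \<in> S\<close>] bound by (intro that[of a]) auto
qed

section \<open>Minimising a product under a budget\<close>

text \<open>For ascending bounds \<open>u\<^sub>1 \<le> u\<^sub>2 \<le> \<dots>\<close>, \<open>greedy_prod us B\<close> is the product \<open>\<Prod>(u\<^sub>i - a\<^sub>i)\<close>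
  obtained by spending the budget \<open>B = \<Sum>a\<^sub>i\<close> greedily, lowering \<open>u\<^sub>1, u\<^sub>2, \<dots>\<close> to \<open>1\<close> in turn;
  it is the least such product.\<close>

fun greedy_prod :: "int list \<Rightarrow> int \<Rightarrow> int" where
  "greedy_prod [] B = 1"
| "greedy_prod (u # us) B = (if B < u then (u - B) * prod_list us else greedy_prod us (B - (u - 1)))"

lemma greedy_prod_decrease_budget:
  assumes "\<forall>v\<in>set ws. w0 \<le> v" "0 \<le> y" "y \<le> w0 - 1" "y \<le> B"
  shows "greedy_prod ws (B - y) \<le> (1 + y) * greedy_prod ws B"
  using assms
proof (induction ws arbitrary: B)
  case Nil
  then show ?case by simp
next
  case (Cons w ws)
  have P: "0 \<le> prod_list ws" using Cons.prems by (intro prod_list_nonneg) auto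
  consider "B < w" | "w \<le> B" "B - y < w" | "w \<le> B - y" by linarith
  then show ?case
  proof cases
    case 1
    have "w - B + y \<le> (1 + y) * (w - B)"
      using 1 Cons.prems mult_left_mono[of 1 "w - B" y] by (simp add: algebra_simps)
    then have "(w - B + y) * prod_list ws \<le> (1 + y) * (w - B) * prod_list ws"
      using P by (rule mult_right_mono)
    moreover have "w - (B - y) = w - B + y" "B - y < w" using 1 Cons.prems by auto
    ultimately show ?thesis using 1 by (simp only: greedy_prod.simps if_True mult.assoc)
  next
    case 2
    show ?thesis
    proof (cases ws)
      case Nil
      then show ?thesis using 2 by simp
    next
      case (Cons w2 ws')
      define q where "q = B - w + 1"
      have q: "1 \<le> q" "q \<le> y" "q < w2" "w0 \<le> w2"
        using 2 Cons.prems \<open>ws = w2 # ws'\<close> unfolding q_def by auto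
      have P': "0 \<le> prod_list ws'" using Cons.prems \<open>ws = w2 # ws'\<close> by (intro prod_list_nonneg) auto
      have "(y - q + 1) * w2 \<le> (1 + y) * (w2 - q)"
        using q Cons.prems mult_nonneg_nonneg[of q "w2 - 1 - y"] by (simp add: algebra_simps)
      then have "(y - q + 1) * w2 * prod_list ws' \<le> (1 + y) * (w2 - q) * prod_list ws'"
        using P' by (rule mult_right_mono)
      then show ?thesis
        using 2 q \<open>ws = w2 # ws'\<close> unfolding q_def by (simp add: algebra_simps)
    qed
  next
    case 3
    then show ?thesis using Cons.IH[of "B - (w - 1)"] Cons.prems by (simp add: algebra_simps)
  qed
qed

lemma greedy_prod_le_prod:
  fixes u a :: "nat \<Rightarrow> int"
  assumes "sorted (map u xs)" "\<forall>i\<in>set xs. 0 \<le> a i \<and> a i \<le> u i - 1" "sum_list (map a xs) \<le> B"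
  shows "greedy_prod (map u xs) B \<le> prod_list (map (\<lambda>i. u i - a i) xs)"
  using assms
proof (induction xs arbitrary: B)
  case Nil
  then show ?case by simp
next
  case (Cons i xs)
  define t where "t = a i"
  define us where "us = map u xs"
  have "0 \<le> sum_list (map a xs)" using Cons.prems by (intro sum_list_nonneg) auto
  then have t: "0 \<le> t" "t \<le> u i - 1" "t \<le> B"
    using Cons.prems unfolding t_def by auto
  have srt: "\<forall>v\<in>set us. u i \<le> v" using Cons.prems unfolding us_def by auto
  have IH: "greedy_prod us (B - t) \<le> prod_list (map (\<lambda>i. u i - a i) xs)"
    unfolding us_def using Cons.prems by (intro Cons.IH) (auto simp: t_def)
  have "greedy_prod (u i # us) B \<le> (u i - t) * greedy_prod us (B - t)"
  proof (cases "B < u i")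
    case True
    show ?thesis
    proof (cases us)
      case Nil
      then show ?thesis using True t by simp
    next
      case (Cons w2 us')
      have w2: "u i \<le> w2" using srt Cons by auto
      have P': "0 \<le> prod_list us'" using srt Cons t by (intro prod_list_nonneg) auto
      have "(u i - B) * w2 \<le> (u i - t) * (w2 - (B - t))"
        using t w2 mult_nonneg_nonneg[of "B - t" "w2 - u i + t"] by (simp add: algebra_simps)
      then have "(u i - B) * w2 * prod_list us' \<le> (u i - t) * (w2 - (B - t)) * prod_list us'"
        using P' by (rule mult_right_mono)
      then show ?thesis using True t w2 Cons by (simp add: mult.assoc)
    qed
  next
    case False
    have "greedy_prod us ((B - t) - (u i - 1 - t)) \<le> (1 + (u i - 1 - t)) * greedy_prod us (B - t)"
      by (rule greedy_prod_decrease_budget[OF srt]) (use t False in auto)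
    moreover have "(B - t) - (u i - 1 - t) = B - (u i - 1)" by simp
    ultimately show ?thesis using False by simp
  qed
  also have "\<dots> \<le> (u i - t) * prod_list (map (\<lambda>i. u i - a i) xs)"
    using IH t by (intro mult_left_mono) auto
  finally show ?case unfolding us_def t_def by simp
qed

lemma greedy_prod_append:
  assumes "\<forall>v\<in>set us. 1 \<le> v" "1 \<le> g"
  shows "greedy_prod (us @ vs) (sum_list (map (\<lambda>v. v - 1) us) + g) = greedy_prod vs g"
  using assms
proof (induction us)
  case (Cons u us)
  have "0 \<le> sum_list (map (\<lambda>v. v - 1) us)" using Cons.prems by (intro sum_list_nonneg) auto
  then show ?case using Cons by (simp add: algebra_simps)
qed simp

lemma prod_diff_remove_ge:
  fixes u a :: "nat \<Rightarrow> int" and s k n :: nat and g :: int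
  assumes mono: "\<And>i j. 1 \<le> i \<Longrightarrow> i \<le> j \<Longrightarrow> j \<le> n \<Longrightarrow> u i \<le> u j"
    and a: "\<And>i. i \<in> {1..n} \<Longrightarrow> 0 \<le> a i \<and> a i \<le> u i - 1"
    and s: "s \<in> {1..k+1}" and kn: "k + 2 \<le> n"
    and budget: "(\<Sum>i\<in>{1..n}-{s}. a i) \<le> (\<Sum>i\<in>{1..k+1}-{s}. u i - 1) + g"
    and g: "1 \<le> g" "g < u (k+2)"
  shows "(u (k+2) - g) * (\<Prod>i=k+3..n. u i) \<le> (\<Prod>i\<in>{1..n}-{s}. u i - a i)"
proof -
  define xsL where "xsL = [1..<s] @ [Suc s..<k+2]"
  define xs where "xs = xsL @ [k+2..<Suc n]"
  have setL: "set xsL = {1..k+1} - {s}" and "distinct xsL"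
    using s unfolding xsL_def by auto
  have "xs = [1..<s] @ [Suc s..<Suc n]"
    using s kn upt_add_eq_append[of "Suc s" "k+2" "Suc n - (k+2)"] unfolding xs_def xsL_def by simp
  then have set_xs: "set xs = {1..n} - {s}" and "distinct xs" and "sorted_wrt (<) xs"
    using s kn by (auto simp: sorted_wrt_append)
  have "sorted (map u xs)"
    unfolding sorted_map using \<open>sorted_wrt (<) xs\<close>
  proof (rule sorted_wrt_mono_rel[rotated])
    show "u x \<le> u y" if "x \<in> set xs" "y \<in> set xs" "x < y" for x y
      using that set_xs mono by auto
  qed
  have "greedy_prod (map u [k+2..<Suc n]) g = greedy_prod (map u xs) (sum_list (map (\<lambda>v. v - 1) (map u xsL)) + g)"
    unfolding xs_def map_append using setL a g(1) kn by (intro greedy_prod_append[symmetric]) force+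
  also have "sum_list (map (\<lambda>v. v - 1) (map u xsL)) = (\<Sum>i\<in>{1..k+1}-{s}. u i - 1)"
    using sum.distinct_set_conv_list[OF \<open>distinct xsL\<close>, of "\<lambda>i. u i - 1"] setL by (simp add: o_def)
  also have "greedy_prod (map u xs) ((\<Sum>i\<in>{1..k+1}-{s}. u i - 1) + g) \<le> prod_list (map (\<lambda>i. u i - a i) xs)"
  proof (rule greedy_prod_le_prod)
    show "sorted (map u xs)" by fact
    show "\<forall>i\<in>set xs. 0 \<le> a i \<and> a i \<le> u i - 1" using a set_xs by blast
    show "sum_list (map a xs) \<le> (\<Sum>i\<in>{1..k+1}-{s}. u i - 1) + g"
      using sum.distinct_set_conv_list[OF \<open>distinct xs\<close>, of a] set_xs budget by simp
  qed
  also have "\<dots> = (\<Prod>i\<in>{1..n}-{s}. u i - a i)"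
    using prod.distinct_set_conv_list[OF \<open>distinct xs\<close>, of "\<lambda>i. u i - a i"] set_xs by simp
  finally have "greedy_prod (map u [k+2..<Suc n]) g \<le> (\<Prod>i\<in>{1..n}-{s}. u i - a i)" .
  moreover have "prod_list (map u [k+3..<Suc n]) = (\<Prod>i=k+3..n. u i)"
    by (subst prod.distinct_set_conv_list[symmetric]) (simp_all del: upt_Suc add: atLeastLessThanSuc_atLeastAtMost)
  moreover have "greedy_prod (map u [k+2..<Suc n]) g = (u (k+2) - g) * prod_list (map u [k+3..<Suc n])"
    using kn g(2) upt_conv_Cons[of "k+2" "Suc n"] by (simp del: upt_Suc add: numeral_3_eq_3)
  ultimately show ?thesis by simp
qed

definition min_weight :: "(nat \<Rightarrow> int) \<Rightarrow> nat \<Rightarrow> nat \<Rightarrow> int \<Rightarrow> int" where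
  "min_weight dd n k l = (if n = k + 1 then dd n - l + 1
     else (dd (k+1) - l + 1) * (dd (k+2) - 1) * (\<Prod>i=k+3..n. dd i))"

lemma prod_ge_min_weight:
  fixes dd a :: "nat \<Rightarrow> int" and n s k :: nat and l e :: int
  assumes mono: "\<And>i j. 1 \<le> i \<Longrightarrow> i \<le> j \<Longrightarrow> j \<le> n \<Longrightarrow> dd i \<le> dd j"
    and a: "\<And>i. i \<in> {1..n} \<Longrightarrow> 0 \<le> a i \<and> a i \<le> dd i - 1"
    and budget: "(\<Sum>i\<in>{1..n}. a i) \<le> (\<Sum>i=1..k. dd i - 1) + l"
    and as: "a s < dd s - e" and e: "0 \<le> e" and l: "dd (k+1) - l = e"
    and s: "s \<in> {1..k+1}" and k: "k < n"
    and gap: "k + 2 \<le> n \<Longrightarrow> dd s < dd (k+2)"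
  shows "min_weight dd n k l \<le> (\<Prod>i\<in>{1..n}. dd i - a i)"
proof -
  have "s \<in> {1..n}" using s k by auto
  then have split: "(\<Prod>i\<in>{1..n}. dd i - a i) = (dd s - a s) * (\<Prod>i\<in>{1..n}-{s}. dd i - a i)"
    by (simp add: prod.remove)
  show ?thesis
  proof (cases "n = k + 1")
    case True
    have "1 \<le> (\<Prod>i\<in>{1..n}-{s}. dd i - a i)"
      using a by (intro prod_ge_1) force
    then have "dd s - a s \<le> (dd s - a s) * (\<Prod>i\<in>{1..n}-{s}. dd i - a i)"
      using as e mult_left_mono[of 1] by fastforce
    then show ?thesis using True l as split unfolding min_weight_def by simp
  next
    case False
    then have kn: "k + 2 \<le> n" using k by simp
    define g where "g = dd s - a s - e"
    have g: "1 \<le> g" "g < dd (k+2)" using as e gap[OF kn] a[OF \<open>s \<in> {1..n}\<close>] unfolding g_def by auto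
    have "(\<Sum>i\<in>{1..k+1}. dd i - 1) = (\<Sum>i=1..k. dd i - 1) + (dd (k+1) - 1)"
      by simp
    moreover have "(\<Sum>i\<in>{1..k+1}. dd i - 1) = (dd s - 1) + (\<Sum>i\<in>{1..k+1}-{s}. dd i - 1)"
      by (rule sum.remove[OF finite_atLeastAtMost s])
    moreover have "(\<Sum>i\<in>{1..n}. a i) = a s + (\<Sum>i\<in>{1..n}-{s}. a i)"
      using \<open>s \<in> {1..n}\<close> by (simp add: sum.remove)
    ultimately have "(\<Sum>i\<in>{1..n}-{s}. a i) \<le> (\<Sum>i\<in>{1..k+1}-{s}. dd i - 1) + g"
      using budget l unfolding g_def by linarith
    then have rest: "(dd (k+2) - g) * (\<Prod>i=k+3..n. dd i) \<le> (\<Prod>i\<in>{1..n}-{s}. dd i - a i)"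
      using mono a s kn g by (intro prod_diff_remove_ge) auto
    have "0 \<le> dd i" if "i \<in> {k+3..n}" for i
      using a[of i] that by auto
    then have P: "0 \<le> (\<Prod>i=k+3..n. dd i)"
      by (intro prod_nonneg) blast
    \<comment> \<open>\<open>(e + g) * (dd (k+2) - g)\<close> is concave in \<open>g\<close> and equals \<open>(e + 1) * (dd (k+2) - 1)\<close> at both
      ends of the range \<open>1 \<le> g \<le> dd (k+2) - e - 1\<close>.\<close>
    have "(e + 1) * (dd (k+2) - 1) \<le> (e + g) * (dd (k+2) - g)"
      using g gap[OF kn] a[OF \<open>s \<in> {1..n}\<close>] mult_nonneg_nonneg[of "g - 1" "dd (k+2) - e - g - 1"]
      unfolding g_def by (simp add: algebra_simps)
    then have "(e + 1) * (dd (k+2) - 1) * (\<Prod>i=k+3..n. dd i) \<le> (e + g) * ((dd (k+2) - g) * (\<Prod>i=k+3..n. dd i))"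
      using P by (metis mult.assoc mult_right_mono)
    also have "\<dots> \<le> (e + g) * (\<Prod>i\<in>{1..n}-{s}. dd i - a i)"
      using rest g e by (intro mult_left_mono) auto
    finally show ?thesis using False l split unfolding g_def min_weight_def by simp
  qed
qed

section \<open>Product polynomials\<close>

definition monomial_of :: "nat \<Rightarrow> (nat \<Rightarrow> nat) \<Rightarrow> (nat \<Rightarrow>\<^sub>0 nat)" where
  "monomial_of n g = Abs_poly_mapping (\<lambda>i. if i \<in> {1..n} then g i else 0)"

lemma lookup_monomial_of: "Poly_Mapping.lookup (monomial_of n g) = (\<lambda>i. if i \<in> {1..n} then g i else 0)"
proof -
  have "finite {i. (if i \<in> {1..n} then g i else 0) \<noteq> 0}"
    by (rule finite_subset[of _ "{1..n}"]) auto
  then show ?thesis unfolding monomial_of_def by simp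
qed

lemma keys_monomial_of: "Poly_Mapping.keys (monomial_of n g) \<subseteq> {1..n}"
  by (auto simp: in_keys_iff lookup_monomial_of split: if_splits)

lemma monomial_of_lookup:
  assumes "Poly_Mapping.keys m \<subseteq> {1..n}"
  shows "monomial_of n (Poly_Mapping.lookup m) = m"
  using assms by (intro poly_mapping_eqI) (auto simp: lookup_monomial_of in_keys_iff)

definition prod_mpoly_coeff :: "nat \<Rightarrow> (nat \<Rightarrow> 'a::comm_ring_1 poly) \<Rightarrow> (nat \<Rightarrow>\<^sub>0 nat) \<Rightarrow> 'a" where
  "prod_mpoly_coeff n p m =
    (if Poly_Mapping.keys m \<subseteq> {1..n} then \<Prod>i\<in>{1..n}. coeff (p i) (Poly_Mapping.lookup m i) else 0)"

definition degree_box :: "nat \<Rightarrow> (nat \<Rightarrow> 'a::zero poly) \<Rightarrow> (nat \<Rightarrow>\<^sub>0 nat) set" where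
  "degree_box n p = monomial_of n ` PiE {1..n} (\<lambda>i. {..degree (p i)})"

lemma finite_degree_box: "finite (degree_box n p)"
  unfolding degree_box_def by (intro finite_imageI finite_PiE) auto

lemma prod_mpoly_coeff_nonzero:
  fixes p :: "nat \<Rightarrow> 'a::idom poly"
  assumes "prod_mpoly_coeff n p m \<noteq> 0"
  shows "Poly_Mapping.keys m \<subseteq> {1..n}" "\<And>i. Poly_Mapping.lookup m i \<le> degree (p i)"
    "m \<in> degree_box n p"
proof -
  show keys: "Poly_Mapping.keys m \<subseteq> {1..n}"
    using assms unfolding prod_mpoly_coeff_def by (auto split: if_splits)
  show deg: "Poly_Mapping.lookup m i \<le> degree (p i)" for i
  proof (cases "i \<in> {1..n}")
    case True
    then show ?thesis using assms keys unfolding prod_mpoly_coeff_def by (auto intro: le_degree)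
  next
    case False
    then have "i \<notin> Poly_Mapping.keys m" using keys by blast
    then show ?thesis by (simp add: in_keys_iff)
  qed
  have "restrict (Poly_Mapping.lookup m) {1..n} \<in> PiE {1..n} (\<lambda>i. {..degree (p i)})"
    using deg by auto
  moreover have "monomial_of n (restrict (Poly_Mapping.lookup m) {1..n}) = monomial_of n (Poly_Mapping.lookup m)"
    unfolding monomial_of_def by (intro arg_cong[where f = Abs_poly_mapping]) auto
  then have "monomial_of n (restrict (Poly_Mapping.lookup m) {1..n}) = m"
    using monomial_of_lookup[OF keys] by simp
  ultimately show "m \<in> degree_box n p" unfolding degree_box_def by (metis imageI)
qed

definition prod_mpoly :: "nat \<Rightarrow> (nat \<Rightarrow> 'a::idom poly) \<Rightarrow> 'a mpoly" where
  "prod_mpoly n p = Abs_poly_mapping (prod_mpoly_coeff n p)"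

lemma lookup_prod_mpoly: "Poly_Mapping.lookup (prod_mpoly n p) = prod_mpoly_coeff n p"
proof -
  have "finite {m. prod_mpoly_coeff n p m \<noteq> 0}"
    by (rule finite_subset[OF _ finite_degree_box[of n p]]) (auto intro: prod_mpoly_coeff_nonzero)
  then show ?thesis unfolding prod_mpoly_def by simp
qed

lemma keys_prod_mpoly: "m \<in> Poly_Mapping.keys (prod_mpoly n p) \<longleftrightarrow> prod_mpoly_coeff n p m \<noteq> 0"
  by (simp add: in_keys_iff lookup_prod_mpoly)

lemma mpoly_eval_prod_mpoly:
  fixes p :: "nat \<Rightarrow> 'a::idom poly"
  shows "mpoly_eval (prod_mpoly n p) x = (\<Prod>i\<in>{1..n}. poly (p i) (x i))"
proof -
  let ?E = "PiE {1..n} (\<lambda>i. {..degree (p i)})"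
  let ?term = "\<lambda>m. prod_mpoly_coeff n p m * (\<Prod>i\<in>{1..n}. x i ^ Poly_Mapping.lookup m i)"
  have inj: "inj_on (monomial_of n) ?E"
  proof (rule inj_onI)
    fix g1 g2 assume g: "g1 \<in> ?E" "g2 \<in> ?E" "monomial_of n g1 = monomial_of n g2"
    then have "\<forall>i\<in>{1..n}. g1 i = g2 i"
      by (metis lookup_monomial_of)
    then show "g1 = g2" using PiE_ext[OF g(1,2)] by blast
  qed
  have "(\<Prod>i\<in>{1..n}. poly (p i) (x i)) = (\<Prod>i\<in>{1..n}. \<Sum>j\<le>degree (p i). coeff (p i) j * x i ^ j)"
    by (simp add: poly_altdef)
  also have "\<dots> = (\<Sum>g\<in>?E. \<Prod>i\<in>{1..n}. coeff (p i) (g i) * x i ^ g i)"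
    by (rule prod_sum_PiE) auto
  also have "\<dots> = (\<Sum>m\<in>degree_box n p. \<Prod>i\<in>{1..n}. coeff (p i) (Poly_Mapping.lookup m i) * x i ^ Poly_Mapping.lookup m i)"
    unfolding degree_box_def sum.reindex[OF inj] o_def
    by (intro sum.cong refl prod.cong) (auto simp: lookup_monomial_of)
  also have "\<dots> = (\<Sum>m\<in>degree_box n p. ?term m)"
  proof (rule sum.cong[OF refl])
    fix m assume "m \<in> degree_box n p"
    then have "Poly_Mapping.keys m \<subseteq> {1..n}" unfolding degree_box_def using keys_monomial_of by blast
    then show "(\<Prod>i\<in>{1..n}. coeff (p i) (Poly_Mapping.lookup m i) * x i ^ Poly_Mapping.lookup m i) = ?term m"
      unfolding prod_mpoly_coeff_def by (simp add: prod.distrib)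
  qed
  also have "\<dots> = (\<Sum>m\<in>Poly_Mapping.keys (prod_mpoly n p). ?term m)"
    by (rule sum.mono_neutral_right[OF finite_degree_box])
      (auto simp: keys_prod_mpoly intro: prod_mpoly_coeff_nonzero)
  also have "\<dots> = mpoly_eval (prod_mpoly n p) x"
    unfolding mpoly_eval_def lookup_prod_mpoly
  proof (rule sum.cong[OF refl])
    fix m assume "m \<in> Poly_Mapping.keys (prod_mpoly n p)"
    then have "Poly_Mapping.keys m \<subseteq> {1..n}"
      unfolding keys_prod_mpoly by (rule prod_mpoly_coeff_nonzero(1))
    then show "?term m = prod_mpoly_coeff n p m * (\<Prod>i\<in>Poly_Mapping.keys m. x i ^ Poly_Mapping.lookup m i)"
      by (simp add: prod_keys_eq_prod_vars)
  qed
  finally show ?thesis by simp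
qed

lemma prod_mpoly_in_Pds:
  fixes p :: "nat \<Rightarrow> 'a::idom poly"
  assumes "int (\<Sum>i\<in>{1..n}. degree (p i)) \<le> d" "int (degree (p s)) < r"
  shows "prod_mpoly n p \<in> Pds n s r d"
  unfolding Pds_def in_vars_def
proof (intro CollectI conjI ballI)
  fix m assume "m \<in> Poly_Mapping.keys (prod_mpoly n p)"
  then have nz: "prod_mpoly_coeff n p m \<noteq> 0" by (simp add: keys_prod_mpoly)
  show keys: "Poly_Mapping.keys m \<subseteq> {1..n}" using prod_mpoly_coeff_nonzero(1)[OF nz] .
  have "mon_deg m \<le> (\<Sum>i\<in>{1..n}. degree (p i))"
    unfolding mon_deg_eq_sum[OF keys] by (intro sum_mono prod_mpoly_coeff_nonzero(2)[OF nz])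
  then show "int (mon_deg m) \<le> d" using assms(1) by linarith
  show "int (Poly_Mapping.lookup m s) < r"
    using prod_mpoly_coeff_nonzero(2)[OF nz, of s] assms(2) by linarith
qed

definition vanishing_poly :: "'a::field set \<Rightarrow> 'a poly" where
  "vanishing_poly R = (\<Prod>\<alpha>\<in>R. [:-\<alpha>, 1:])"

lemma degree_vanishing_poly: "finite R \<Longrightarrow> degree (vanishing_poly R) = card R"
  unfolding vanishing_poly_def by (subst degree_prod_eq_sum_degree) auto

lemma poly_vanishing_poly_eq_0: "finite R \<Longrightarrow> poly (vanishing_poly R) y = 0 \<longleftrightarrow> y \<in> R"
  unfolding vanishing_poly_def by (simp add: poly_prod prod_zero_iff)

lemma card_nonzero_prod_vanishing:
  fixes K R :: "nat \<Rightarrow> 'a::{field,finite} set"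
  shows "card {x \<in> grid n K. mpoly_eval (prod_mpoly n (\<lambda>i. vanishing_poly (R i))) x \<noteq> 0}
    = (\<Prod>i\<in>{1..n}. card (K i - R i))"
proof -
  have "{x \<in> grid n K. mpoly_eval (prod_mpoly n (\<lambda>i. vanishing_poly (R i))) x \<noteq> 0} = PiE {1..n} (\<lambda>i. K i - R i)"
    unfolding grid_def mpoly_eval_prod_mpoly
    by (auto simp: prod_zero_iff poly_vanishing_poly_eq_0 PiE_iff extensional_def)
  then show ?thesis by (simp add: card_PiE)
qed

section \<open>The minimum distance\<close>

lemma chain_subset:
  assumes "\<And>i. 1 \<le> i \<Longrightarrow> i < n \<Longrightarrow> K i \<subseteq> K (Suc i)"
    and "1 \<le> i" "i \<le> j" "j \<le> n"
  shows "K i \<subseteq> K j"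
  using assms(3,4)
proof (induction j rule: dec_induct)
  case (step m)
  then show ?case using assms(1)[of m] assms(2) by auto
qed simp

lemma min_dist_eval_code_eqI:
  assumes "finite X"
    and lower: "\<And>f x0. f \<in> P \<Longrightarrow> x0 \<in> X \<Longrightarrow> mpoly_eval f x0 \<noteq> 0 \<Longrightarrow> w \<le> card {x \<in> X. mpoly_eval f x \<noteq> 0}"
    and attained: "g \<in> P" "card {x \<in> X. mpoly_eval g x \<noteq> 0} = w" and "0 < w"
  shows "min_dist X (eval_code X P) = w"
proof -
  have hweight: "hweight X (restrict (mpoly_eval f) X) = card {x \<in> X. mpoly_eval f x \<noteq> 0}" for f
    unfolding hweight_def by (intro arg_cong[where f = card]) auto
  let ?W = "{hweight X c | c. c \<in> eval_code X P \<and> (\<exists>x\<in>X. c x \<noteq> 0)}"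
  have "?W \<subseteq> {..card X}"
    unfolding hweight_def using \<open>finite X\<close> by (auto intro: card_mono)
  then have "finite ?W" by (rule finite_subset) simp
  moreover have "w \<in> ?W"
  proof -
    have "card {x \<in> X. mpoly_eval g x \<noteq> 0} \<noteq> 0" using attained(2) \<open>0 < w\<close> by simp
    then have "{x \<in> X. mpoly_eval g x \<noteq> 0} \<noteq> {}" by (metis card.empty)
    then obtain x where "x \<in> X" "mpoly_eval g x \<noteq> 0" by blast
    then show ?thesis
      unfolding eval_code_def using attained hweight[of g]
      by (intro CollectI exI[of _ "restrict (mpoly_eval g) X"]) auto
  qed
  moreover have "w \<le> v" if "v \<in> ?W" for v
    using that lower hweight unfolding eval_code_def by auto
  ultimately show ?thesis unfolding min_dist_def by (intro Min_eqI) auto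
qed

lemma min_weight_pos:
  assumes "\<And>i. i \<in> {1..n} \<Longrightarrow> 2 \<le> dd i" "l \<le> dd (k+1) - 1" "k < n"
  shows "0 < min_weight dd n k l"
proof -
  have "0 < dd i" if "i \<in> {k+3..n}" for i using assms(1)[of i] that by auto
  then have "0 < (\<Prod>i=k+3..n. dd i)" by (intro prod_pos) blast
  moreover have "2 \<le> dd (k+2)" if "k + 2 \<le> n" using assms(1) that by simp
  ultimately show ?thesis using assms(2,3) unfolding min_weight_def by auto
qed

lemma weight_ge_min_weight:
  fixes K :: "nat \<Rightarrow> 'a::{field,finite} set"
  defines "dd \<equiv> \<lambda>i. int (card (K i))"
  assumes subf: "\<And>i. i \<in> {1..n} \<Longrightarrow> is_subfield (K i)"
    and mono: "\<And>i j. 1 \<le> i \<Longrightarrow> i \<le> j \<Longrightarrow> j \<le> n \<Longrightarrow> dd i \<le> dd j"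
    and s: "s \<in> {1..k+1}" and k: "k < n" and gap: "k + 2 \<le> n \<Longrightarrow> dd s < dd (k+2)"
    and e: "0 \<le> e" and l: "dd (k+1) - l = e"
    and f: "f \<in> Pds n s (dd s - e) ((\<Sum>i=1..k. dd i - 1) + l)"
    and x0: "x0 \<in> grid n K" "mpoly_eval f x0 \<noteq> 0"
  shows "min_weight dd n k l \<le> int (card {x \<in> grid n K. mpoly_eval f x \<noteq> 0})"
proof -
  obtain a where a: "\<And>i. i \<in> {1..n} \<Longrightarrow> a i < card (K i)"
    and deg: "int (\<Sum>i\<in>{1..n}. a i) \<le> (\<Sum>i=1..k. dd i - 1) + l" and as: "int (a s) < dd s - e"
    and weight: "(\<Prod>i\<in>{1..n}. card (K i) - a i) \<le> card {x \<in> grid n K. mpoly_eval f x \<noteq> 0}"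
    using Pds_weight_ge_footprint[where K = K, OF subf f x0] by blast
  have "min_weight dd n k l \<le> (\<Prod>i\<in>{1..n}. dd i - int (a i))"
    using mono a deg as e l s k gap unfolding dd_def
    by (intro prod_ge_min_weight) (auto simp: less_imp_le_nat)
  also have "\<dots> = int (\<Prod>i\<in>{1..n}. card (K i) - a i)"
    unfolding dd_def of_nat_prod using a by (intro prod.cong refl) (simp add: of_nat_diff less_imp_le)
  finally show ?thesis using weight by linarith
qed

text \<open>The number \<open>|K\<^sub>i - R\<^sub>i|\<close> of values of \<open>x\<^sub>i\<close> at which the \<open>i\<close>-th factor of the minimum weight
  codeword does not vanish.\<close>

definition witness_weight :: "(nat \<Rightarrow> int) \<Rightarrow> nat \<Rightarrow> nat \<Rightarrow> int \<Rightarrow> nat \<Rightarrow> int" where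
  "witness_weight dd s k e i =
    (if i = s then e + 1 else if i \<le> k+1 then 1 else if i = k+2 then dd i - 1 else dd i)"

lemma atLeastAtMost_1_split:
  fixes k n :: nat
  assumes "k < n"
  shows "{1..n} = {1..k+1} \<union> {k+2..n}" "{1..k+1} \<inter> {k+2..n} = {}"
  using assms by auto

lemma sum_diff_witness_weight_le:
  assumes s: "s \<in> {1..k+1}" and k: "k < n" and l: "dd (k+1) - l = e"
  shows "(\<Sum>i\<in>{1..n}. dd i - witness_weight dd s k e i) \<le> (\<Sum>i=1..k. dd i - 1) + l"
proof -
  let ?w = "witness_weight dd s k e"
  have "(\<Sum>i\<in>{1..n}. dd i - ?w i) = (\<Sum>i\<in>{1..k+1}. dd i - ?w i) + (\<Sum>i\<in>{k+2..n}. dd i - ?w i)"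
    unfolding atLeastAtMost_1_split(1)[OF k]
    by (rule sum.union_disjoint) (use atLeastAtMost_1_split(2)[OF k] in auto)
  also have "(\<Sum>i\<in>{1..k+1}. dd i - ?w i) = (dd s - ?w s) + (\<Sum>i\<in>{1..k+1}-{s}. dd i - ?w i)"
    by (rule sum.remove[OF finite_atLeastAtMost s])
  also have "(\<Sum>i\<in>{1..k+1}-{s}. dd i - ?w i) = (\<Sum>i\<in>{1..k+1}-{s}. dd i - 1)"
    by (rule sum.cong) (auto simp: witness_weight_def)
  also have "(dd s - ?w s) + (\<Sum>i\<in>{1..k+1}-{s}. dd i - 1) = (\<Sum>i=1..k. dd i - 1) + l - 1"
    using sum.remove[OF finite_atLeastAtMost s, of "\<lambda>i. dd i - 1"] l by (simp add: witness_weight_def)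
  also have "(\<Sum>i\<in>{k+2..n}. dd i - ?w i) \<le> 1"
  proof (cases "k + 2 \<le> n")
    case True
    then have "{k+2..n} = insert (k+2) {k+3..n}" by auto
    then show ?thesis using s unfolding witness_weight_def by simp
  qed simp
  finally show ?thesis by simp
qed

lemma prod_witness_weight:
  assumes s: "s \<in> {1..k+1}" and k: "k < n" and l: "dd (k+1) - l = e"
  shows "(\<Prod>i\<in>{1..n}. witness_weight dd s k e i) = min_weight dd n k l"
proof -
  let ?w = "witness_weight dd s k e"
  have "(\<Prod>i\<in>{1..n}. ?w i) = (\<Prod>i\<in>{1..k+1}. ?w i) * (\<Prod>i\<in>{k+2..n}. ?w i)"
    unfolding atLeastAtMost_1_split(1)[OF k]
    by (rule prod.union_disjoint) (use atLeastAtMost_1_split(2)[OF k] in auto)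
  also have "(\<Prod>i\<in>{1..k+1}. ?w i) = e + 1"
    using prod.remove[OF finite_atLeastAtMost s, of ?w] by (simp add: witness_weight_def)
  also have "(e + 1) * (\<Prod>i\<in>{k+2..n}. ?w i) = min_weight dd n k l"
  proof (cases "k + 2 \<le> n")
    case True
    then have "{k+2..n} = insert (k+2) {k+3..n}" by auto
    then show ?thesis using True s l unfolding witness_weight_def min_weight_def by simp
  next
    case False
    then have "n = k + 1" using k by simp
    then show ?thesis using l unfolding min_weight_def by simp
  qed
  finally show ?thesis .
qed

lemma min_weight_attained:
  fixes K :: "nat \<Rightarrow> 'a::{field,finite} set"
  defines "dd \<equiv> \<lambda>i. int (card (K i))"
  assumes subf: "\<And>i. i \<in> {1..n} \<Longrightarrow> is_subfield (K i)"
    and s: "s \<in> {1..k+1}" and k: "k < n"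
    and e: "1 \<le> e" "e < dd s" and l: "dd (k+1) - l = e"
  obtains f where "f \<in> Pds n s (dd s - e) ((\<Sum>i=1..k. dd i - 1) + l)"
    "int (card {x \<in> grid n K. mpoly_eval f x \<noteq> 0}) = min_weight dd n k l"
proof -
  have K0: "0 \<in> K i" if "i \<in> {1..n}" for i
    using subf[OF that] unfolding is_subfield_def by auto
  have "nat (dd s - e - 1) \<le> card (K s)" using e unfolding dd_def by simp
  then obtain Rs where Rs: "Rs \<subseteq> K s" "card Rs = nat (dd s - e - 1)"
    by (meson obtain_subset_with_card_n)
  define R where "R i = (if i = s then Rs else if i \<le> k+1 then K i - {0} else if i = k+2 then {0} else {})" for i
  define f where "f = prod_mpoly n (\<lambda>i. vanishing_poly (R i))"
  have RK: "R i \<subseteq> K i" if "i \<in> {1..n}" for i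
    using Rs K0[OF that] unfolding R_def by auto
  have card_R: "int (card (R i)) = dd i - witness_weight dd s k e i" if "i \<in> {1..n}" for i
  proof -
    have "1 \<le> card (K i)" using K0[OF that] by (simp add: Suc_le_eq card_gt_0_iff) blast
    then show ?thesis
      using Rs e K0[OF that] unfolding R_def witness_weight_def dd_def
      by (auto simp: card_Diff_singleton of_nat_diff)
  qed
  have "f \<in> Pds n s (dd s - e) ((\<Sum>i=1..k. dd i - 1) + l)"
    unfolding f_def
  proof (rule prod_mpoly_in_Pds)
    have "int (\<Sum>i\<in>{1..n}. card (R i)) = (\<Sum>i\<in>{1..n}. dd i - witness_weight dd s k e i)"
      unfolding of_nat_sum by (rule sum.cong[OF refl card_R])
    then show "int (\<Sum>i\<in>{1..n}. degree (vanishing_poly (R i))) \<le> (\<Sum>i=1..k. dd i - 1) + l"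
      using sum_diff_witness_weight_le[where dd = dd, OF s k l] by (simp add: degree_vanishing_poly)
    show "int (degree (vanishing_poly (R s))) < dd s - e"
      using Rs e by (simp add: degree_vanishing_poly R_def)
  qed
  moreover have "int (card {x \<in> grid n K. mpoly_eval f x \<noteq> 0}) = (\<Prod>i\<in>{1..n}. witness_weight dd s k e i)"
    unfolding f_def card_nonzero_prod_vanishing of_nat_prod using RK card_R
    by (intro prod.cong refl) (simp add: card_Diff_subset card_mono dd_def of_nat_diff)
  ultimately show ?thesis using that prod_witness_weight[where dd = dd, OF s k l] by simp
qed

lemma min_dist_eq_min_weight:
  fixes K :: "nat \<Rightarrow> 'a::{field,finite} set"
  defines "dd \<equiv> \<lambda>i. int (card (K i))"
  assumes subf: "\<And>i. i \<in> {1..n} \<Longrightarrow> is_subfield (K i)"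
    and mono: "\<And>i j. 1 \<le> i \<Longrightarrow> i \<le> j \<Longrightarrow> j \<le> n \<Longrightarrow> dd i \<le> dd j"
    and s: "s \<in> {1..k+1}" and k: "k < n" and gap: "k + 2 \<le> n \<Longrightarrow> dd s < dd (k+2)"
    and e: "1 \<le> e" "e < dd s" and l: "dd (k+1) - l = e"
  shows "int (min_dist (grid n K) (eval_code (grid n K) (Pds n s (dd s - e) ((\<Sum>i=1..k. dd i - 1) + l))))
    = min_weight dd n k l"
proof -
  obtain f0 where f0: "f0 \<in> Pds n s (dd s - e) ((\<Sum>i=1..k. dd i - 1) + l)"
    "int (card {x \<in> grid n K. mpoly_eval f0 x \<noteq> 0}) = min_weight dd n k l"
    using min_weight_attained[where K = K, OF subf s k e[unfolded dd_def] l[unfolded dd_def]] unfolding dd_def by blast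
  have pos: "0 < min_weight dd n k l"
    using subfield_card_ge_2[OF subf] l e k unfolding dd_def by (intro min_weight_pos) auto
  have "min_dist (grid n K) (eval_code (grid n K) (Pds n s (dd s - e) ((\<Sum>i=1..k. dd i - 1) + l)))
      = nat (min_weight dd n k l)"
  proof (rule min_dist_eval_code_eqI[where g = f0])
    show "finite (grid n K)" unfolding grid_def by (intro finite_PiE) auto
    show "nat (min_weight dd n k l) \<le> card {x \<in> grid n K. mpoly_eval f x \<noteq> 0}"
      if "f \<in> Pds n s (dd s - e) ((\<Sum>i=1..k. dd i - 1) + l)" "x0 \<in> grid n K" "mpoly_eval f x0 \<noteq> 0"
      for f x0
      using weight_ge_min_weight[where K = K, OF subf mono[unfolded dd_def] s k gap[unfolded dd_def] _ l[unfolded dd_def]]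
        that e unfolding dd_def by force
  qed (use f0 pos in auto)
  then show ?thesis using pos by simp
qed

theorem mainTheorem11:
  fixes K :: "nat \<Rightarrow> 'a::{field,finite} set"
    and n s k :: nat and \<delta> l d :: int
  defines "dd \<equiv> \<lambda>i. int (card (K i))"
  assumes subf: "\<And>i. i \<in> {1..n} \<Longrightarrow> is_subfield (K i)"
    and chain: "\<And>i. 1 \<le> i \<Longrightarrow> i < n \<Longrightarrow> K i \<subseteq> K (Suc i)"
    and n2: "n \<ge> 2"
    and delta2: "\<delta> \<ge> 2"
    and s_rng: "s \<in> {1..n}"
    and r_pos: "dd s - \<delta> + 1 \<ge> 1"
    and k_rng: "k < n"
    and l_rng: "0 < l" "l \<le> dd (k+1) - 1"
    and d_def: "d = (\<Sum>i=1..k. dd i - 1) + l"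
    and case_hyp: "n = k + 1 \<or> dd 1 \<ge> 3"
    and not_i: "\<not> (k + 2 \<le> n \<and> dd (k+2) \<le> dd s)"
    and not_ii: "\<not> (dd s \<le> dd (k+1) \<and> 0 \<le> dd s - (dd (k+1) - l) \<and> dd s - (dd (k+1) - l) < dd s - \<delta> + 1)"
    and eq_r: "dd s - (dd (k+1) - l) = dd s - \<delta> + 1"
  shows "int (min_dist (grid n K) (eval_code (grid n K) (Pds n s (dd s - \<delta> + 1) d))) =
    (if n = k + 1 then dd n - l + 1
     else (dd (k+1) - l + 1) * (dd (k+2) - 1) * (\<Prod>i=k+3..n. dd i))"
proof -
  define e where "e = \<delta> - 1"
  have mono: "dd i \<le> dd j" if "1 \<le> i" "i \<le> j" "j \<le> n" for i j
    using card_mono[OF finite chain_subset[where K = K, OF chain that]] unfolding dd_def by simp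
  have s: "s \<in> {1..k+1}"
    using not_i s_rng mono[of "k+2" s] by (cases "k + 2 \<le> s") auto
  have gap: "dd s < dd (k+2)" if "k + 2 \<le> n" using not_i that by auto
  have "1 \<le> e" "e < dd s" "dd (k+1) - l = e" using delta2 r_pos eq_r unfolding e_def by auto
  then have "int (min_dist (grid n K) (eval_code (grid n K) (Pds n s (dd s - e) d))) = min_weight dd n k l"
    using min_dist_eq_min_weight[where K = K, OF subf mono[unfolded dd_def] s k_rng gap[unfolded dd_def]]
    unfolding dd_def d_def by blast
  then show ?thesis unfolding e_def min_weight_def by (simp add: algebra_simps)
qed

end
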